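(* Assume there exist $\psi\in\mathcal B_{b,\gg}(\chi)$, $t_0>0$, $a>0$ and a submarkovian kernel $\tilde P$ with $\psi(x)\Lambda(dx)P_{t_0}(x,dy)=a\psi(y)\Lambda(dy)\tilde P(y,dx)$ as measures on $\chi\times\chi$. Let $\pi$ be a QSD of $(X_t)_{0\le t<\tau_\partial}$ with $\pi\ll\Lambda$, and suppose $(P_t)_{t\ge0}$ has a non-negative $L^1(\pi)$-right eigenfunction $\phi$ (i.e. $P_t\phi=\lambda(\pi)^t\phi$ $\pi$-a.e. for all $t$) with $\pi(\phi)=1$. Suppose further that $$\Big\|\frac{d\mathcal L_\mu(X_t\mid\tau_\partial>t)}{d\pi}-1\Big\|_{L^\infty(\pi)}\to0\ \ (t\to\infty)\quad\text{whenever }\mu\in\mathcal P_\infty(\pi)\text{ and }\mu(\phi)>0.$$ Then $\pi\in\mathcal P_\infty(\Lambda)$, i.e. $\pi$ has an essentially bounded density with respect to $\Lambda$.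
   Context: $\chi$ is a metric space with Borel $\sigma$-algebra and a distinguished $\sigma$-finite Borel measure $\Lambda$ of full support. $(X_t)_{0\le t<\tau_\partial}$ is a killed Markov process on $\chi$ with absorption time $\tau_\partial$ and submarkovian semigroup $P_t(x,A)=\mathbb P_x(X_t\in A,\tau_\partial>t)$, acting on $L^1(\pi)$ by $P_tf(x)=\mathbb E_x[f(X_t)\mathbb 1(\tau_\partial>t)]$. A QSD is $\pi\in\mathcal P(\chi)$ with $\mathbb P_\pi(X_t\in\cdot\mid\tau_\partial>t)=\pi$ for all $t$; $\lambda(\pi)=\mathbb P_\pi(\tau_\partial>1)$. $\mathcal P_\infty(m)$ = probability measures $\ll m$ with density in $L^\infty(m)$. $\mathcal B_{b,\gg}(\chi)$ = bounded Borel functions with positive infimum. *)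

theory Defs
  imports "HOL-Probability.Probability"
begin

definition submarkov_kernel :: "('a::topological_space \<Rightarrow> 'a measure) \<Rightarrow> bool" where
  "submarkov_kernel K \<longleftrightarrow> K \<in> borel \<rightarrow>\<^sub>M subprob_algebra borel"

text \<open>The submarkovian semigroup P t x A = P_x(X_t in A, tau > t) of a killed Markov process.\<close>
definition submarkov_semigroup :: "(real \<Rightarrow> 'a::topological_space \<Rightarrow> 'a measure) \<Rightarrow> bool" where
  "submarkov_semigroup P \<longleftrightarrow>
     (\<forall>t\<ge>0. submarkov_kernel (P t)) \<and>
     (\<forall>x. P 0 x = return borel x) \<and>
     (\<forall>s t x. s \<ge> 0 \<longrightarrow> t \<ge> 0 \<longrightarrow> P (s + t) x = bind (P s x) (P t))"

definition cond_law :: "(real \<Rightarrow> 'a::topological_space \<Rightarrow> 'a measure) \<Rightarrow> 'a measure \<Rightarrow> real \<Rightarrow> 'a measure" where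
  "cond_law P \<mu> t = scale_measure (1 / emeasure (bind \<mu> (P t)) UNIV) (bind \<mu> (P t))"

definition is_QSD :: "(real \<Rightarrow> 'a::topological_space \<Rightarrow> 'a measure) \<Rightarrow> 'a measure \<Rightarrow> bool" where
  "is_QSD P \<pi> \<longleftrightarrow> prob_space \<pi> \<and> sets \<pi> = sets borel \<and>
     (\<forall>t\<ge>0. emeasure (bind \<pi> (P t)) UNIV > 0 \<and> cond_law P \<pi> t = \<pi>)"

definition lambda_QSD :: "(real \<Rightarrow> 'a::topological_space \<Rightarrow> 'a measure) \<Rightarrow> 'a measure \<Rightarrow> real" where
  "lambda_QSD P \<pi> = measure (bind \<pi> (P 1)) UNIV"

definition P_inf :: "'a measure \<Rightarrow> 'a measure set" where
  "P_inf m = {\<mu>. prob_space \<mu> \<and> sets \<mu> = sets m \<and>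
      (\<exists>f\<in>borel_measurable m. \<mu> = density m (\<lambda>x. ennreal (f x)) \<and> (\<exists>C. AE x in m. f x \<le> C))}"

definition Bb_pos :: "('a::topological_space \<Rightarrow> real) set" where
  "Bb_pos = {\<psi>. \<psi> \<in> borel_measurable borel \<and> (\<exists>C. \<forall>x. \<bar>\<psi> x\<bar> \<le> C) \<and> (\<exists>c>0. \<forall>x. c \<le> \<psi> x)}"

end

theory Submission
  imports Defs
begin

text \<open>
  Write \<open>\<pi> = h \<Lambda>\<close>. Restricting \<open>\<pi>\<close> to a sublevel set \<open>{h \<le> n}\<close> of positive
  \<open>\<phi>\<close>-mass gives a test measure \<open>\<mu> \<in> P\<^sub>\<infinity>(\<pi>)\<close> with \<open>\<mu>(\<phi>) > 0\<close> and \<open>\<mu> \<le> K \<Lambda>\<close>.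
  Because \<open>c \<le> \<psi> \<le> C\<close>, the duality relation makes the adjoint of \<open>P\<^sub>t\<^sub>0\<close> with respect to
  \<open>\<Lambda>\<close> bounded by \<open>a C / c\<close>, so \<open>P\<^sub>t\<^sub>0\<close> maps measures dominated by \<open>K \<Lambda>\<close> to measures
  dominated by \<open>(a C / c) K \<Lambda>\<close>, and \<open>\<mu> P\<^sub>n\<^sub>t\<^sub>0 \<le> K (a C / c)\<^sup>n \<Lambda>\<close>. For large \<open>t = n t\<^sub>0\<close> the
  conditional law of \<open>\<mu>\<close> has a \<open>\<pi>\<close>-density at least \<open>1/2\<close>, hence \<open>\<pi>\<close> is dominated by a
  multiple of the normalised \<open>\<mu> P\<^sub>t\<close>, thus of \<open>\<Lambda>\<close>, and \<open>h\<close> is essentially bounded.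
\<close>

text \<open>The order on measures only compares measures of sets when the \<open>\<sigma>\<close>-algebras agree.\<close>

lemma le_scale_measureI:
  assumes "sets \<nu> = sets M" and "\<And>A. A \<in> sets M \<Longrightarrow> emeasure \<nu> A \<le> K * emeasure M A"
  shows "\<nu> \<le> scale_measure K M"
  using assms by (simp add: le_measure)

lemma le_scale_measureD:
  assumes "\<nu> \<le> scale_measure K M" and "sets \<nu> = sets M"
  shows "emeasure \<nu> A \<le> K * emeasure M A"
  using le_measureD3[OF assms(1)] assms(2) by simp

lemma nn_integral_emeasure_kernel_le_of_duality:
  fixes \<Lambda> :: "'a::topological_space measure"
  assumes sets_\<Lambda>: "sets \<Lambda> = sets borel"
    and Q: "Q \<in> borel \<rightarrow>\<^sub>M subprob_algebra borel"
    and Q': "Q' \<in> borel \<rightarrow>\<^sub>M subprob_algebra borel"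
    and c: "0 < c" and \<psi>_lower: "\<forall>x. c \<le> \<psi> x" and \<psi>_upper: "\<forall>x. \<psi> x \<le> C" and a: "0 \<le> a"
    and duality: "\<forall>D \<in> sets (borel \<Otimes>\<^sub>M borel).
          (\<integral>\<^sup>+ x. ennreal (\<psi> x) * (\<integral>\<^sup>+ y. indicator D (x, y) \<partial>Q x) \<partial>\<Lambda>)
        = ennreal a * (\<integral>\<^sup>+ y. ennreal (\<psi> y) * (\<integral>\<^sup>+ x. indicator D (x, y) \<partial>Q' y) \<partial>\<Lambda>)"
    and B: "B \<in> sets borel"
  shows "(\<integral>\<^sup>+ x. emeasure (Q x) B \<partial>\<Lambda>) \<le> ennreal (a * C / c) * emeasure \<Lambda> B"
proof -
  have C: "0 \<le> C" using c \<psi>_lower \<psi>_upper by (meson less_le_trans less_imp_le)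
  have "(\<lambda>x. emeasure (Q x) B) \<in> borel_measurable borel"
    using measurable_emeasure_subprob_algebra[OF B] Q by measurable
  then have Q_B: "(\<lambda>x. emeasure (Q x) B) \<in> borel_measurable \<Lambda>"
    using sets_\<Lambda> by (simp cong: measurable_cong_sets)
  have sets_Q: "sets (Q x) = sets borel" for x
    using measurable_space[OF Q] by (simp add: space_subprob_algebra)
  have Q'_le_1: "emeasure (Q' y) (space (Q' y)) \<le> 1" for y
    using measurable_space[OF Q'] by (simp add: space_subprob_algebra subprob_space.emeasure_space_le_1)
  have Q_indicator: "(\<integral>\<^sup>+ y. indicator (UNIV \<times> B) (x, y) \<partial>Q x) = emeasure (Q x) B" for x
    using nn_integral_indicator[of B "Q x"] B sets_Q by (simp add: indicator_def)
  have "ennreal c * (\<integral>\<^sup>+ x. emeasure (Q x) B \<partial>\<Lambda>) = (\<integral>\<^sup>+ x. ennreal c * emeasure (Q x) B \<partial>\<Lambda>)"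
    using Q_B by (rule nn_integral_cmult[symmetric])
  also have "\<dots> \<le> (\<integral>\<^sup>+ x. ennreal (\<psi> x) * (\<integral>\<^sup>+ y. indicator (UNIV \<times> B) (x, y) \<partial>Q x) \<partial>\<Lambda>)"
    unfolding Q_indicator using \<psi>_lower by (intro nn_integral_mono mult_right_mono ennreal_leI) auto
  also have "\<dots> = ennreal a * (\<integral>\<^sup>+ y. ennreal (\<psi> y) * (\<integral>\<^sup>+ x. indicator (UNIV \<times> B) (x, y) \<partial>Q' y) \<partial>\<Lambda>)"
    using B by (intro duality[rule_format] pair_measureI) auto
  also have "\<dots> \<le> ennreal a * (\<integral>\<^sup>+ y. ennreal C * indicator B y \<partial>\<Lambda>)"
  proof (intro mult_left_mono nn_integral_mono)
    fix y
    have "(\<integral>\<^sup>+ x. indicator (UNIV \<times> B) (x, y) \<partial>Q' y) \<le> indicator B y"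
      using Q'_le_1[of y] by (cases "y \<in> B") (auto simp: indicator_def)
    then show "ennreal (\<psi> y) * (\<integral>\<^sup>+ x. indicator (UNIV \<times> B) (x, y) \<partial>Q' y) \<le> ennreal C * indicator B y"
      using \<psi>_upper by (intro mult_mono ennreal_leI) auto
  qed simp
  also have "\<dots> = ennreal a * (ennreal C * emeasure \<Lambda> B)"
    using B sets_\<Lambda> by (simp add: nn_integral_cmult_indicator)
  finally have bound: "ennreal c * (\<integral>\<^sup>+ x. emeasure (Q x) B \<partial>\<Lambda>) \<le> ennreal (a * C) * emeasure \<Lambda> B"
    using a C by (simp add: ennreal_mult mult.assoc)
  have "(\<integral>\<^sup>+ x. emeasure (Q x) B \<partial>\<Lambda>) = ennreal c * (\<integral>\<^sup>+ x. emeasure (Q x) B \<partial>\<Lambda>) / ennreal c"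
    using c by (simp add: mult.commute[of "ennreal c"] mult_divide_eq_ennreal)
  also have "\<dots> \<le> ennreal (a * C) * emeasure \<Lambda> B / ennreal c"
    using bound by (rule divide_right_mono_ennreal)
  also have "\<dots> = ennreal (a * C / c) * emeasure \<Lambda> B"
    using a c C by (simp add: ennreal_divide_times ennreal_times_divide flip: divide_ennreal)
  finally show ?thesis .
qed

lemma bind_le_scale_measure:
  assumes space_M: "space M \<noteq> {}" and sets_\<nu>: "sets \<nu> = sets M" and \<nu>: "\<nu> \<le> scale_measure K M"
    and Q: "Q \<in> M \<rightarrow>\<^sub>M subprob_algebra M"
    and Q_bound: "\<And>B. B \<in> sets M \<Longrightarrow> (\<integral>\<^sup>+ x. emeasure (Q x) B \<partial>M) \<le> r * emeasure M B"
  shows "bind \<nu> Q \<le> scale_measure (K * r) M"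
proof (rule le_scale_measureI)
  have Q_\<nu>: "Q \<in> \<nu> \<rightarrow>\<^sub>M subprob_algebra M"
    using Q sets_\<nu> by (simp cong: measurable_cong_sets)
  have space_\<nu>: "space \<nu> \<noteq> {}"
    using sets_eq_imp_space_eq[OF sets_\<nu>] space_M by simp
  show "sets (bind \<nu> Q) = sets M"
    using sets_bind_measurable[OF Q_\<nu> space_\<nu>] .
  fix B assume B: "B \<in> sets M"
  have Q_B: "(\<lambda>x. emeasure (Q x) B) \<in> borel_measurable M"
    using measurable_emeasure_subprob_algebra[OF B] Q by measurable
  have "emeasure (bind \<nu> Q) B = (\<integral>\<^sup>+ x. emeasure (Q x) B \<partial>\<nu>)"
    using emeasure_bind[OF space_\<nu> Q_\<nu> B] .
  also have "\<dots> \<le> (\<integral>\<^sup>+ x. emeasure (Q x) B \<partial>scale_measure K M)"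
    using \<nu> sets_\<nu> by (intro nn_integral_mono_measure) auto
  also have "\<dots> = K * (\<integral>\<^sup>+ x. emeasure (Q x) B \<partial>M)"
    using Q_B by (rule nn_integral_scale_measure)
  also have "\<dots> \<le> K * (r * emeasure M B)"
    using Q_bound[OF B] by (rule mult_left_mono) simp
  finally show "emeasure (bind \<nu> Q) B \<le> K * r * emeasure M B"
    by (simp add: mult.assoc)
qed

lemma submarkov_semigroup_kernel:
  "submarkov_semigroup P \<Longrightarrow> 0 \<le> t \<Longrightarrow> P t \<in> borel \<rightarrow>\<^sub>M subprob_algebra borel"
  unfolding submarkov_semigroup_def submarkov_kernel_def by blast

lemma sets_bind_submarkov_semigroup:
  assumes "submarkov_semigroup P" "0 \<le> t" "sets \<mu> = sets borel"
  shows "sets (bind \<mu> (P t)) = sets borel"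
proof -
  have "P t \<in> \<mu> \<rightarrow>\<^sub>M subprob_algebra borel"
    using submarkov_semigroup_kernel[OF assms(1,2)] assms(3) by (simp cong: measurable_cong_sets)
  moreover have "space \<mu> \<noteq> {}"
    using sets_eq_imp_space_eq[OF assms(3)] by simp
  ultimately show ?thesis by (rule sets_bind_measurable)
qed

lemma bind_submarkov_semigroup_add:
  assumes P: "submarkov_semigroup P" and "0 \<le> s" "0 \<le> t" and sets_\<mu>: "sets \<mu> = sets borel"
  shows "bind \<mu> (P (s + t)) = bind (bind \<mu> (P s)) (P t)"
proof -
  have "P s \<in> \<mu> \<rightarrow>\<^sub>M subprob_algebra borel"
    using submarkov_semigroup_kernel[OF P \<open>0 \<le> s\<close>] sets_\<mu> by (simp cong: measurable_cong_sets)
  then have "bind (bind \<mu> (P s)) (P t) = bind \<mu> (\<lambda>x. bind (P s x) (P t))"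
    using submarkov_semigroup_kernel[OF P \<open>0 \<le> t\<close>] by (rule bind_assoc)
  also have "(\<lambda>x. bind (P s x) (P t)) = P (s + t)"
    using P assms(2,3) unfolding submarkov_semigroup_def by (auto simp: fun_eq_iff)
  finally show ?thesis ..
qed

lemma bind_submarkov_semigroup_le_scale_measure_power:
  assumes P: "submarkov_semigroup P" and t: "0 \<le> t" and sets_\<Lambda>: "sets \<Lambda> = sets borel"
    and sets_\<mu>: "sets \<mu> = sets borel" and \<mu>: "\<mu> \<le> scale_measure K \<Lambda>"
    and P_bound: "\<And>B. B \<in> sets borel \<Longrightarrow> (\<integral>\<^sup>+ x. emeasure (P t x) B \<partial>\<Lambda>) \<le> r * emeasure \<Lambda> B"
  shows "bind \<mu> (P (real n * t)) \<le> scale_measure (K * r ^ n) \<Lambda>"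
proof (induction n)
  case 0
  have "P 0 = return borel"
    using P unfolding submarkov_semigroup_def by auto
  then show ?case
    using \<mu> sets_\<mu> by (simp add: bind_return'')
next
  case (Suc n)
  have "real (Suc n) * t = real n * t + t"
    by (simp add: algebra_simps)
  then have "bind \<mu> (P (real (Suc n) * t)) = bind (bind \<mu> (P (real n * t))) (P t)"
    using bind_submarkov_semigroup_add[OF P _ t sets_\<mu>, of "real n * t"] t by simp
  also have "\<dots> \<le> scale_measure (K * r ^ n * r) \<Lambda>"
  proof (rule bind_le_scale_measure[OF _ _ Suc.IH])
    show "space \<Lambda> \<noteq> {}" using sets_eq_imp_space_eq[OF sets_\<Lambda>] by simp
    show "sets (bind \<mu> (P (real n * t))) = sets \<Lambda>"
      using sets_bind_submarkov_semigroup[OF P _ sets_\<mu>] t sets_\<Lambda> by simp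
    show "P t \<in> \<Lambda> \<rightarrow>\<^sub>M subprob_algebra \<Lambda>"
      using submarkov_semigroup_kernel[OF P t] sets_\<Lambda>
      by (simp cong: measurable_cong_sets subprob_algebra_cong)
  qed (use P_bound sets_\<Lambda> in auto)
  finally show ?case by (simp add: mult_ac)
qed

lemma submarkov_semigroup_le_scale_measure_power_of_duality:
  fixes \<Lambda> :: "'a::topological_space measure"
  assumes P: "submarkov_semigroup P" and t0: "0 < t0" and sets_\<Lambda>: "sets \<Lambda> = sets borel"
    and \<psi>: "\<psi> \<in> Bb_pos" and a: "0 \<le> a" and Q': "submarkov_kernel Q'"
    and duality: "\<forall>D \<in> sets (borel \<Otimes>\<^sub>M borel).
          (\<integral>\<^sup>+ x. ennreal (\<psi> x) * (\<integral>\<^sup>+ y. indicator D (x, y) \<partial>P t0 x) \<partial>\<Lambda>)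
        = ennreal a * (\<integral>\<^sup>+ y. ennreal (\<psi> y) * (\<integral>\<^sup>+ x. indicator D (x, y) \<partial>Q' y) \<partial>\<Lambda>)"
  obtains r where "\<And>\<mu> K n. sets \<mu> = sets borel \<Longrightarrow> \<mu> \<le> scale_measure K \<Lambda> \<Longrightarrow>
      bind \<mu> (P (real n * t0)) \<le> scale_measure (K * ennreal r ^ n) \<Lambda>"
proof -
  obtain c C where c: "0 < c" "\<forall>x. c \<le> \<psi> x" and C: "\<forall>x. \<psi> x \<le> C"
    using \<psi> unfolding Bb_pos_def by (auto dest: abs_le_D1)
  have "(\<integral>\<^sup>+ x. emeasure (P t0 x) B \<partial>\<Lambda>) \<le> ennreal (a * C / c) * emeasure \<Lambda> B"
    if "B \<in> sets borel" for B
    using sets_\<Lambda> submarkov_semigroup_kernel[OF P] t0 Q'[unfolded submarkov_kernel_def] c C a duality that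
    by (intro nn_integral_emeasure_kernel_le_of_duality) auto
  with P t0 sets_\<Lambda> show ?thesis
    by (intro that bind_submarkov_semigroup_le_scale_measure_power) auto
qed

lemma AE_density_finite:
  assumes h: "h \<in> borel_measurable M" and finite: "emeasure (density M h) (space M) \<noteq> \<infinity>"
  shows "AE x in density M h. h x \<noteq> \<infinity>"
proof -
  have "integral\<^sup>N M h \<noteq> \<infinity>"
    using finite h by (simp add: emeasure_density)
  then have "AE x in M. h x \<noteq> \<infinity>"
    by (rule nn_integral_PInf_AE[OF h])
  then show ?thesis
    using h by (simp add: AE_density) (auto elim: AE_mp)
qed

lemma exists_sublevel_set_nn_integral_pos:
  fixes f h :: "'a \<Rightarrow> ennreal"
  assumes f: "f \<in> borel_measurable M" and h: "h \<in> borel_measurable M"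
    and h_finite: "AE x in M. h x \<noteq> \<infinity>" and pos: "0 < integral\<^sup>N M f"
  shows "\<exists>n::nat. 0 < (\<integral>\<^sup>+ x. f x * indicator {x \<in> space M. h x \<le> of_nat n} x \<partial>M)"
proof (rule ccontr)
  define S where "S n = {x \<in> space M. h x \<le> of_nat n}" for n :: nat
  assume "\<not> ?thesis"
  then have "(\<integral>\<^sup>+ x. f x * indicator (S n) x \<partial>M) = 0" for n
    unfolding S_def by (simp add: not_less)
  moreover have "S n \<in> sets M" for n
    unfolding S_def using h by measurable
  ultimately have "AE x in M. f x * indicator (S n) x = 0" for n
    using f by (subst nn_integral_0_iff_AE[symmetric]) auto
  then have "AE x in M. \<forall>n. f x * indicator (S n) x = 0"
    by (subst AE_all_countable) blast
  then have "AE x in M. f x = 0"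
    using h_finite AE_space
  proof eventually_elim
    case (elim x)
    obtain n where "h x < of_nat n"
      using ennreal_Ex_less_of_nat elim(2) by (auto simp: less_top)
    then have "x \<in> S n"
      using elim unfolding S_def by auto
    then show "f x = 0"
      using elim(1) by (auto dest: spec[of _ n])
  qed
  then have "integral\<^sup>N M f = 0"
    using f by (simp add: nn_integral_0_iff_AE)
  with pos show False by simp
qed

lemma uniform_measure_in_P_inf:
  assumes "prob_space \<pi>" and S: "S \<in> sets \<pi>" and pos: "emeasure \<pi> S \<noteq> 0"
  shows "uniform_measure \<pi> S \<in> P_inf \<pi>"
proof -
  interpret prob_space \<pi> by fact
  define p where "p = measure \<pi> S"
  have p: "0 < p" and emeasure_S: "emeasure \<pi> S = ennreal p"
    using pos by (auto simp: p_def emeasure_eq_measure zero_less_measure_iff)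
  have "(\<lambda>x. indicator S x / emeasure \<pi> S) = (\<lambda>x. ennreal (indicator S x / p))"
    using p by (auto simp: fun_eq_iff emeasure_S indicator_def divide_ennreal[symmetric])
  then have density: "uniform_measure \<pi> S = density \<pi> (\<lambda>x. ennreal (indicator S x / p))"
    unfolding uniform_measure_def by simp
  show ?thesis
    unfolding P_inf_def
  proof (intro CollectI conjI bexI[of _ "\<lambda>x. indicator S x / p"] exI[of _ "1 / p"])
    show "prob_space (uniform_measure \<pi> S)"
      using pos by (intro prob_space_uniform_measure) auto
    show "AE x in \<pi>. indicator S x / p \<le> 1 / p"
      using p by (auto simp: indicator_def)
  qed (use density S in auto)
qed

lemma uniform_measure_density_le_scale_measure:
  assumes h: "h \<in> borel_measurable M" and S: "S \<in> sets M" and h_le: "\<forall>x\<in>S. h x \<le> c"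
  shows "uniform_measure (density M h) S \<le> scale_measure (c / emeasure (density M h) S) M"
proof (rule le_scale_measureI)
  show "sets (uniform_measure (density M h) S) = sets M" by simp
  fix B assume B: "B \<in> sets M"
  have "emeasure (density M h) (S \<inter> B) = (\<integral>\<^sup>+ x. h x * indicator (S \<inter> B) x \<partial>M)"
    using h S B by (simp add: emeasure_density)
  also have "\<dots> \<le> (\<integral>\<^sup>+ x. c * indicator B x \<partial>M)"
    using h_le by (intro nn_integral_mono) (auto simp: indicator_def)
  also have "\<dots> = c * emeasure M B"
    using B by (rule nn_integral_cmult_indicator)
  finally have "emeasure (density M h) (S \<inter> B) / emeasure (density M h) S \<le> c * emeasure M B / emeasure (density M h) S"
    by (rule divide_right_mono_ennreal)
  then show "emeasure (uniform_measure (density M h) S) B \<le> c / emeasure (density M h) S * emeasure M B"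
    using S B by (simp add: ennreal_divide_times ennreal_times_divide mult.commute)
qed

lemma exists_test_measure_le_scale_measure:
  fixes f h :: "'a \<Rightarrow> ennreal"
  assumes prob: "prob_space (density M h)" and h: "h \<in> borel_measurable M"
    and f: "f \<in> borel_measurable M" and pos: "0 < (\<integral>\<^sup>+ x. f x \<partial>density M h)"
  obtains \<mu> K where "\<mu> \<in> P_inf (density M h)" and "0 < (\<integral>\<^sup>+ x. f x \<partial>\<mu>)"
    and "\<mu> \<le> scale_measure K M" and "K \<noteq> \<infinity>"
proof -
  let ?\<pi> = "density M h"
  interpret prob_space ?\<pi> by fact
  have h_\<pi>: "h \<in> borel_measurable ?\<pi>" and f_\<pi>: "f \<in> borel_measurable ?\<pi>"
    using h f by (simp_all cong: measurable_cong_sets)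
  have "AE x in ?\<pi>. h x \<noteq> \<infinity>"
    using h by (rule AE_density_finite) (use emeasure_space_1 in simp)
  then obtain n :: nat
    where n: "0 < (\<integral>\<^sup>+ x. f x * indicator {x \<in> space ?\<pi>. h x \<le> of_nat n} x \<partial>?\<pi>)"
    using exists_sublevel_set_nn_integral_pos[OF f_\<pi> h_\<pi> _ pos] by blast
  define S where "S = {x \<in> space M. h x \<le> of_nat n}"
  have S: "S \<in> sets M"
    unfolding S_def using h by measurable
  have f_S: "0 < (\<integral>\<^sup>+ x. f x * indicator S x \<partial>?\<pi>)"
    using n by (simp add: S_def)
  have S_pos: "emeasure ?\<pi> S \<noteq> 0"
    using f_S nn_integral_null_set[of S ?\<pi> f] S by (auto simp: null_sets_def)
  show ?thesis
  proof
    show "uniform_measure ?\<pi> S \<in> P_inf ?\<pi>"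
      using S S_pos by (intro uniform_measure_in_P_inf prob) auto
    show "0 < (\<integral>\<^sup>+ x. f x \<partial>uniform_measure ?\<pi> S)"
      using f_S f_\<pi> S by (simp add: nn_integral_uniform_measure ennreal_zero_less_divide less_top[symmetric])
    show "uniform_measure ?\<pi> S \<le> scale_measure (of_nat n / emeasure ?\<pi> S) M"
      using h S by (rule uniform_measure_density_le_scale_measure) (simp add: S_def)
    show "of_nat n / emeasure ?\<pi> S \<noteq> \<infinity>"
      using S_pos by (simp add: ennreal_divide_eq_top_iff)
  qed
qed

lemma cond_law_le_scale_measure:
  assumes "sets (bind \<mu> (P t)) = sets M" and "bind \<mu> (P t) \<le> scale_measure K M"
  shows "cond_law P \<mu> t \<le> scale_measure (K / emeasure (bind \<mu> (P t)) UNIV) M"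
proof (rule le_scale_measureI)
  show "sets (cond_law P \<mu> t) = sets M"
    using assms(1) by (simp add: cond_law_def)
  fix A assume "A \<in> sets M"
  have "emeasure (cond_law P \<mu> t) A = emeasure (bind \<mu> (P t)) A / emeasure (bind \<mu> (P t)) UNIV"
    by (simp add: cond_law_def ennreal_divide_times)
  also have "\<dots> \<le> K * emeasure M A / emeasure (bind \<mu> (P t)) UNIV"
    using le_scale_measureD[OF assms(2,1)] by (rule divide_right_mono_ennreal)
  finally show "emeasure (cond_law P \<mu> t) A \<le> K / emeasure (bind \<mu> (P t)) UNIV * emeasure M A"
    by (simp add: ennreal_divide_times ennreal_times_divide mult.commute)
qed

lemma le_scale_measure_of_density_ge:
  assumes sets_\<pi>: "sets \<pi> = sets M" and g: "g \<in> borel_measurable \<pi>"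
    and density_le: "density \<pi> (\<lambda>x. ennreal (g x)) \<le> scale_measure K M"
    and \<epsilon>: "0 < \<epsilon>" and g_ge: "AE x in \<pi>. \<epsilon> \<le> g x"
  shows "\<pi> \<le> scale_measure (K / ennreal \<epsilon>) M"
proof (rule le_scale_measureI[OF sets_\<pi>])
  fix A assume A: "A \<in> sets M"
  have "emeasure \<pi> A * ennreal \<epsilon> = (\<integral>\<^sup>+ x. ennreal \<epsilon> * indicator A x \<partial>\<pi>)"
    using A sets_\<pi> by (simp add: nn_integral_cmult_indicator mult.commute)
  also have "\<dots> \<le> (\<integral>\<^sup>+ x. ennreal (g x) * indicator A x \<partial>\<pi>)"
    using g_ge by (intro nn_integral_mono_AE) (auto elim!: eventually_mono intro: mult_right_mono ennreal_leI)
  also have "\<dots> = emeasure (density \<pi> (\<lambda>x. ennreal (g x))) A"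
    using A sets_\<pi> g by (simp add: emeasure_density)
  also have "\<dots> \<le> K * emeasure M A"
    using le_scale_measureD[OF density_le] sets_\<pi> by simp
  finally have "emeasure \<pi> A * ennreal \<epsilon> / ennreal \<epsilon> \<le> K * emeasure M A / ennreal \<epsilon>"
    by (rule divide_right_mono_ennreal)
  then have "emeasure \<pi> A \<le> K * emeasure M A / ennreal \<epsilon>"
    using \<epsilon> by (simp add: mult_divide_eq_ennreal)
  then show "emeasure \<pi> A \<le> K / ennreal \<epsilon> * emeasure M A"
    by (simp add: ennreal_divide_times ennreal_times_divide)
qed

lemma le_scale_measure_of_cond_law_density_ge:
  assumes sets_\<pi>: "sets \<pi> = sets M" and sets_bind: "sets (bind \<mu> (P t)) = sets M"
    and bind_le: "bind \<mu> (P t) \<le> scale_measure K M"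
    and cond_law: "cond_law P \<mu> t = density \<pi> (\<lambda>x. ennreal (g x))" and g: "g \<in> borel_measurable \<pi>"
    and \<epsilon>: "0 < \<epsilon>" and g_ge: "AE x in \<pi>. \<epsilon> \<le> g x"
  shows "\<pi> \<le> scale_measure (K / emeasure (bind \<mu> (P t)) UNIV / ennreal \<epsilon>) M"
  using sets_\<pi> g _ \<epsilon> g_ge
proof (rule le_scale_measure_of_density_ge)
  show "density \<pi> (\<lambda>x. ennreal (g x)) \<le> scale_measure (K / emeasure (bind \<mu> (P t)) UNIV) M"
    unfolding cond_law[symmetric] using sets_bind bind_le by (rule cond_law_le_scale_measure)
qed

lemma AE_le_of_density_le_scale_measure:
  assumes h: "h \<in> borel_measurable M" and finite: "emeasure (density M h) (space M) \<noteq> \<infinity>"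
    and density_le: "density M h \<le> scale_measure c M"
  shows "AE x in M. h x \<le> c"
proof (rule ccontr)
  assume not_le: "\<not> (AE x in M. h x \<le> c)"
  define A where "A = {x \<in> space M. c < h x}"
  have A: "A \<in> sets M"
    unfolding A_def using h by measurable
  have "(\<integral>\<^sup>+ x. c * indicator A x \<partial>M) \<le> (\<integral>\<^sup>+ x. h x * indicator A x \<partial>M)"
    by (intro nn_integral_mono) (auto simp: A_def indicator_def less_imp_le)
  also have "\<dots> = emeasure (density M h) A"
    using h A by (simp add: emeasure_density)
  also have "\<dots> \<le> emeasure (density M h) (space M)"
    unfolding A_def by (intro emeasure_mono) auto
  finally have c_A_finite: "(\<integral>\<^sup>+ x. c * indicator A x \<partial>M) \<noteq> \<infinity>"
    using finite by (auto simp: top_unique)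
  have "\<not> (AE x in M. h x * indicator A x \<le> c * indicator A x)"
  proof
    assume "AE x in M. h x * indicator A x \<le> c * indicator A x"
    then have "AE x in M. h x \<le> c"
      using AE_space by eventually_elim (auto simp: A_def indicator_def not_less[symmetric])
    with not_le show False ..
  qed
  then have "(\<integral>\<^sup>+ x. c * indicator A x \<partial>M) < (\<integral>\<^sup>+ x. h x * indicator A x \<partial>M)"
    using A h c_A_finite
    by (intro nn_integral_less) (auto simp: indicator_def less_imp_le A_def)
  also have "\<dots> = emeasure (density M h) A"
    using h A by (simp add: emeasure_density)
  also have "\<dots> \<le> c * emeasure M A"
    using le_scale_measureD[OF density_le] by simp
  also have "\<dots> = (\<integral>\<^sup>+ x. c * indicator A x \<partial>M)"
    using A by (simp add: nn_integral_cmult_indicator)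
  finally show False by simp
qed

lemma density_in_P_inf_of_le_scale_measure:
  assumes prob: "prob_space (density M h)" and h: "h \<in> borel_measurable M"
    and density_le: "density M h \<le> scale_measure K M" and K: "K \<noteq> \<infinity>"
  shows "density M h \<in> P_inf M"
  unfolding P_inf_def
proof (intro CollectI conjI bexI[of _ "\<lambda>x. enn2real (h x)"] exI[of _ "enn2real K"])
  interpret prob_space "density M h" by fact
  have h_le: "AE x in M. h x \<le> K"
    using h _ density_le by (rule AE_le_of_density_le_scale_measure) (use emeasure_space_1 in simp)
  then have "AE x in M. h x = ennreal (enn2real (h x))"
  proof eventually_elim
    case (elim x)
    then have "h x \<noteq> \<infinity>"
      using K by (metis infinity_ennreal_def top_unique)
    then show ?case by (simp add: less_top)
  qed
  then show "density M h = density M (\<lambda>x. ennreal (enn2real (h x)))"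
    using h by (intro density_cong) auto
  show "AE x in M. enn2real (h x) \<le> enn2real K"
    using h_le by eventually_elim (rule enn2real_mono, use K in \<open>auto simp: less_top\<close>)
qed (use prob h in auto)

theorem mainTheorem8:
  fixes \<Lambda> :: "'a::metric_space measure"
    and P :: "real \<Rightarrow> 'a \<Rightarrow> 'a measure"
    and Ptil :: "'a \<Rightarrow> 'a measure"
    and \<psi> \<phi> :: "'a \<Rightarrow> real"
    and t0 a :: real
    and \<pi> :: "'a measure"
  assumes "sets \<Lambda> = sets borel"
    and "sigma_finite_measure \<Lambda>"
    and "\<forall>U. open U \<and> U \<noteq> {} \<longrightarrow> emeasure \<Lambda> U > 0"
    and "submarkov_semigroup P"
    and "\<psi> \<in> Bb_pos" and "t0 > 0" and "a > 0"
    and "submarkov_kernel Ptil"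
    and "\<forall>C \<in> sets (borel \<Otimes>\<^sub>M borel).
          (\<integral>\<^sup>+ x. ennreal (\<psi> x) * (\<integral>\<^sup>+ y. indicator C (x, y) \<partial>P t0 x) \<partial>\<Lambda>)
        = ennreal a * (\<integral>\<^sup>+ y. ennreal (\<psi> y) * (\<integral>\<^sup>+ x. indicator C (x, y) \<partial>Ptil y) \<partial>\<Lambda>)"
    and "is_QSD P \<pi>"
    and "absolutely_continuous \<Lambda> \<pi>"
    and "\<phi> \<in> borel_measurable borel" and "\<forall>x. 0 \<le> \<phi> x" and "integrable \<pi> \<phi>"
    and "\<forall>t\<ge>0. AE x in \<pi>. (\<integral>\<^sup>+ y. ennreal (\<phi> y) \<partial>P t x) = ennreal (lambda_QSD P \<pi> powr t * \<phi> x)"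
    and "(\<integral>x. \<phi> x \<partial>\<pi>) = 1"
    and "\<forall>\<mu> \<in> P_inf \<pi>. (\<integral>\<^sup>+ x. ennreal (\<phi> x) \<partial>\<mu>) > 0 \<longrightarrow>
          (\<forall>\<epsilon>>0. \<exists>T. \<forall>t\<ge>T. emeasure (bind \<mu> (P t)) UNIV > 0 \<and>
             (\<exists>g\<in>borel_measurable borel. cond_law P \<mu> t = density \<pi> (\<lambda>x. ennreal (g x)) \<and>
                 (AE x in \<pi>. \<bar>g x - 1\<bar> \<le> \<epsilon>)))"
  shows "\<pi> \<in> P_inf \<Lambda>"
proof -
  have sets_\<pi>: "sets \<pi> = sets borel" and prob_\<pi>: "prob_space \<pi>"
    using assms(10) unfolding is_QSD_def by auto
  interpret \<Lambda>: sigma_finite_measure \<Lambda> by fact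
  define h where "h = RN_deriv \<Lambda> \<pi>"
  have h: "h \<in> borel_measurable \<Lambda>" and \<pi>_density: "\<pi> = density \<Lambda> h"
    unfolding h_def using \<Lambda>.density_RN_deriv[OF assms(11)] sets_\<pi> assms(1) by auto
  have "(\<integral>\<^sup>+ x. ennreal (\<phi> x) \<partial>\<pi>) = 1"
    using assms(13,14,16) by (simp add: nn_integral_eq_integral)
  then obtain \<mu> K where \<mu>: "\<mu> \<in> P_inf \<pi>" "0 < (\<integral>\<^sup>+ x. ennreal (\<phi> x) \<partial>\<mu>)"
    and \<mu>_le: "\<mu> \<le> scale_measure K \<Lambda>" and K: "K \<noteq> \<infinity>"
    using exists_test_measure_le_scale_measure[of \<Lambda> h "\<lambda>x. ennreal (\<phi> x)"] prob_\<pi> h assms(12,1)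
    unfolding \<pi>_density by (auto cong: measurable_cong_sets)
  have sets_\<mu>: "sets \<mu> = sets borel"
    using \<mu>(1) sets_\<pi> by (simp add: P_inf_def)
  obtain r where iterate: "\<And>n. bind \<mu> (P (real n * t0)) \<le> scale_measure (K * ennreal r ^ n) \<Lambda>"
    using submarkov_semigroup_le_scale_measure_power_of_duality[OF assms(4,6,1,5) _ assms(8,9)]
      assms(7) sets_\<mu> \<mu>_le by (metis less_imp_le)
  obtain T where T: "\<forall>t\<ge>T. 0 < emeasure (bind \<mu> (P t)) UNIV \<and>
      (\<exists>g\<in>borel_measurable borel. cond_law P \<mu> t = density \<pi> (\<lambda>x. ennreal (g x)) \<and>
         (AE x in \<pi>. \<bar>g x - 1\<bar> \<le> 1 / 2))"
    using assms(17) \<mu> by (meson divide_pos_pos zero_less_one zero_less_numeral)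
  obtain n :: nat where "T < real n * t0"
    using ex_less_of_nat_mult[OF assms(6)] by blast
  then obtain g where mass: "0 < emeasure (bind \<mu> (P (real n * t0))) UNIV"
    and g: "g \<in> borel_measurable borel"
    and cond_law: "cond_law P \<mu> (real n * t0) = density \<pi> (\<lambda>x. ennreal (g x))"
    and g_close: "AE x in \<pi>. \<bar>g x - 1\<bar> \<le> 1 / 2"
    using T by (meson less_imp_le)
  let ?D = "K * ennreal r ^ n / emeasure (bind \<mu> (P (real n * t0))) UNIV / ennreal (1 / 2)"
  have "AE x in \<pi>. 1 / 2 \<le> g x"
    using g_close by eventually_elim linarith
  then have "\<pi> \<le> scale_measure ?D \<Lambda>"
    using sets_\<pi> assms(1) sets_bind_submarkov_semigroup[OF assms(4) _ sets_\<mu>] assms(6) iterate cond_law g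
    by (intro le_scale_measure_of_cond_law_density_ge) (auto cong: measurable_cong_sets)
  moreover have "?D \<noteq> \<infinity>"
    using K mass by (auto simp: ennreal_divide_eq_top_iff ennreal_mult_eq_top_iff power_eq_top_ennreal)
  ultimately show ?thesis
    using density_in_P_inf_of_le_scale_measure[of \<Lambda> h] prob_\<pi> h unfolding \<pi>_density by blast
qed

end
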